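(* Every semicommutative ring is almost Armendariz.
   Context: All rings are associative with identity. A ring $R$ is semicommutative if for all $a,b\in R$, $ab=0$ implies $aRb=0$. For a ring $R$, $P(R)$ denotes the prime radical of $R$ (the intersection of all prime ideals of $R$, equivalently the set of strongly nilpotent elements of $R$). A ring $R$ is called almost Armendariz if whenever $f(x)=\sum_{i=0}^m a_ix^i$ and $g(x)=\sum_{j=0}^n b_jx^j\in R[x]$ satisfy $f(x)g(x)=0$, then $a_ib_j\in P(R)$ for all $0\le i\le m$, $0\le j\le n$. *)

theory Defs
  imports Main
begin

text \<open>Polynomials over a noncommutative ring are represented by coefficient functions
  with an explicit degree bound, since the library type poly needs commutativity
  for multiplication.\<close>

definition semicommutative :: "'a::ring_1 itself \<Rightarrow> bool" where
  "semicommutative _ \<longleftrightarrow> (\<forall>a b :: 'a. a * b = 0 \<longrightarrow> (\<forall>r. a * r * b = 0))"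

definition two_sided_ideal :: "'a::ring_1 set \<Rightarrow> bool" where
  "two_sided_ideal I \<longleftrightarrow> 0 \<in> I \<and> (\<forall>x\<in>I. \<forall>y\<in>I. x + y \<in> I) \<and> (\<forall>x\<in>I. - x \<in> I)
     \<and> (\<forall>x\<in>I. \<forall>r. r * x \<in> I \<and> x * r \<in> I)"

text \<open>Prime ideal: proper ideal P such that for ideals A, B with AB \<subseteq> P,
  A \<subseteq> P or B \<subseteq> P (AB \<subseteq> P iff all products ab lie in P, as P is additively closed).\<close>
definition prime_ideal :: "'a::ring_1 set \<Rightarrow> bool" where
  "prime_ideal P \<longleftrightarrow> two_sided_ideal P \<and> P \<noteq> UNIV \<and>
     (\<forall>A B. two_sided_ideal A \<and> two_sided_ideal B \<and> (\<forall>a\<in>A. \<forall>b\<in>B. a * b \<in> P)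
        \<longrightarrow> A \<subseteq> P \<or> B \<subseteq> P)"

definition prime_radical :: "'a::ring_1 itself \<Rightarrow> 'a set" where
  "prime_radical _ = \<Inter> {P. prime_ideal P}"

text \<open>Product of f = sum_{i\<le>m} a_i x^i and g = sum_{j\<le>n} b_j x^j is zero.\<close>
definition poly_prod_zero :: "(nat \<Rightarrow> 'a::ring_1) \<Rightarrow> nat \<Rightarrow> (nat \<Rightarrow> 'a) \<Rightarrow> nat \<Rightarrow> bool" where
  "poly_prod_zero a m b n \<longleftrightarrow>
     (\<forall>k. (\<Sum>p\<in>{(i, j). i \<le> m \<and> j \<le> n \<and> i + j = k}. a (fst p) * b (snd p)) = 0)"

definition almost_armendariz :: "'a::ring_1 itself \<Rightarrow> bool" where
  "almost_armendariz T \<longleftrightarrow>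
     (\<forall>(a :: nat \<Rightarrow> 'a) m b n. poly_prod_zero a m b n \<longrightarrow>
        (\<forall>i\<le>m. \<forall>j\<le>n. a i * b j \<in> prime_radical T))"

end

theory Submission
  imports Defs
begin

text \<open>In a semicommutative ring, if \<open>x\<^sup>k = 0\<close> then every product
  \<open>r\<^sub>k x \<dots> r\<^sub>1 x y\<close> vanishes, since zero products absorb inserted factors. This makes
  the nilpotent elements closed under multiplication and addition, and puts them into every prime
  ideal \<open>P\<close>: if \<open>x\<^sup>n = 0\<close> with \<open>n \<ge> 2\<close> then each \<open>x r x\<close> is nilpotent of index at most
  \<open>\<lceil>n/2\<rceil>\<close>, so \<open>x R x \<subseteq> P\<close> by induction on the index and hence \<open>x \<in> P\<close>.
  It therefore suffices that \<open>f g = 0\<close> forces each \<open>a\<^sub>i b\<^sub>j\<close> to be nilpotent. This goes by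
  induction over the antidiagonals \<open>i + j = k\<close>, and along each one over \<open>j\<close>: multiplying the
  \<open>k\<close>-th coefficient of \<open>f g\<close> on the left by \<open>b\<^sub>j\<close>, every term other than \<open>b\<^sub>j a\<^sub>i b\<^sub>j\<close> is
  nilpotent by induction, hence so is \<open>(a\<^sub>i b\<^sub>j)\<^sup>2 = a\<^sub>i (b\<^sub>j a\<^sub>i b\<^sub>j)\<close>.\<close>

definition nilpotent :: "'a::ring_1 \<Rightarrow> bool" where
  "nilpotent x \<longleftrightarrow> (\<exists>n. x ^ n = 0)"

inductive interleaved_power :: "'a::ring_1 \<Rightarrow> nat \<Rightarrow> 'a \<Rightarrow> bool" for x where
  interleaved_power_0: "interleaved_power x 0 y"
| interleaved_power_Suc: "interleaved_power x k y \<Longrightarrow> interleaved_power x (Suc k) (r * x * y)"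

lemma interleaved_power_mult_left:
  "interleaved_power x k y \<Longrightarrow> interleaved_power x k (s * y)"
proof (induction rule: interleaved_power.induct)
  case (interleaved_power_0 y)
  show ?case by (rule interleaved_power.interleaved_power_0)
next
  case (interleaved_power_Suc k y r)
  have "interleaved_power x (Suc k) ((s * r) * x * y)"
    using interleaved_power_Suc.hyps by (rule interleaved_power.interleaved_power_Suc)
  then show ?case by (simp add: mult.assoc)
qed

lemma interleaved_power_SucD:
  "interleaved_power x (Suc k) y \<Longrightarrow> interleaved_power x k y"
proof (induction k arbitrary: y)
  case 0
  show ?case by (rule interleaved_power_0)
next
  case (Suc k)
  then obtain r y' where "y = r * x * y'" "interleaved_power x (Suc k) y'"
    by (auto elim: interleaved_power.cases)
  then show ?case using Suc.IH interleaved_power_Suc by blast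
qed

lemma interleaved_power_mono:
  "k \<le> l \<Longrightarrow> interleaved_power x l y \<Longrightarrow> interleaved_power x k y"
  by (induction l rule: dec_induct) (auto dest: interleaved_power_SucD)

lemma interleaved_power_power_mult:
  "interleaved_power x k ((r * x) ^ k)"
proof (induction k)
  case 0
  show ?case by (rule interleaved_power_0)
next
  case (Suc k)
  then have "interleaved_power x (Suc k) (r * x * (r * x) ^ k)"
    by (rule interleaved_power_Suc)
  then show ?case by simp
qed

lemma interleaved_power_sandwich:
  "interleaved_power x (2 * m) ((x * r * x) ^ m)"
proof (induction m)
  case 0
  show ?case by (simp add: interleaved_power_0)
next
  case (Suc m)
  then have "interleaved_power x (Suc (Suc (2 * m))) (1 * x * (r * x * (x * r * x) ^ m))"
    by (intro interleaved_power_Suc)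
  then show ?case by (simp add: mult.assoc)
qed

definition word_prod :: "'a::ring_1 \<Rightarrow> 'a \<Rightarrow> bool list \<Rightarrow> 'a" where
  "word_prod a b w = prod_list (map (\<lambda>c. if c then a else b) w)"

lemma word_prod_Nil [simp]: "word_prod a b [] = 1"
  and word_prod_Cons [simp]: "word_prod a b (c # w) = (if c then a else b) * word_prod a b w"
  by (simp_all add: word_prod_def)

lemma word_prod_map_Not: "word_prod b a (map Not w) = word_prod a b w"
  by (induction w) simp_all

lemma lists_length_Suc_eq:
  "{w :: bool list. length w = Suc N} = Cons True ` {w. length w = N} \<union> Cons False ` {w. length w = N}"
proof (intro set_eqI iffI)
  fix w :: "bool list"
  assume "w \<in> {w. length w = Suc N}"
  then obtain c v where "w = c # v" "length v = N" by (cases w) auto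
  then show "w \<in> Cons True ` {w. length w = N} \<union> Cons False ` {w. length w = N}"
    by (cases c) auto
qed auto

lemma power_add_eq_sum_words:
  "(a + b) ^ N = (\<Sum>w \<in> {w. length w = N}. word_prod a b w)"
proof (induction N)
  case 0
  have "{w :: bool list. length w = 0} = {[]}" by auto
  then show ?case by simp
next
  case (Suc N)
  let ?L = "{w :: bool list. length w = N}"
  have fin: "finite ?L"
    using finite_lists_length_eq[of "UNIV :: bool set" N] by simp
  have "(\<Sum>w \<in> {w. length w = Suc N}. word_prod a b w)
      = (\<Sum>w \<in> Cons True ` ?L. word_prod a b w) + (\<Sum>w \<in> Cons False ` ?L. word_prod a b w)"
    unfolding lists_length_Suc_eq by (rule sum.union_disjoint) (auto simp: fin)
  also have "\<dots> = (\<Sum>w \<in> ?L. a * word_prod a b w) + (\<Sum>w \<in> ?L. b * word_prod a b w)"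
    by (simp add: sum.reindex)
  also have "\<dots> = (a + b) * (a + b) ^ N"
    by (simp add: Suc.IH sum_distrib_left distrib_right sum.distrib)
  finally show ?case by simp
qed

lemma interleaved_power_word_prod:
  "interleaved_power a (length (filter (\<lambda>c. c) w)) (word_prod a b w)"
proof (induction w)
  case Nil
  show ?case by (simp add: interleaved_power_0)
next
  case (Cons c w)
  show ?case
  proof (cases c)
    case True
    have "interleaved_power a (Suc (length (filter (\<lambda>c. c) w))) (1 * a * word_prod a b w)"
      using Cons.IH by (rule interleaved_power_Suc)
    then show ?thesis using True by simp
  next
    case False
    then show ?thesis using interleaved_power_mult_left[OF Cons.IH] by simp
  qed
qed

lemma nilpotent_0 [simp]: "nilpotent 0"
  unfolding nilpotent_def by (rule exI[of _ 1]) simp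

lemma nilpotent_minus: "nilpotent x \<Longrightarrow> nilpotent (- x)"
  unfolding nilpotent_def by (metis power_minus mult_zero_right)

lemma nilpotent_square: "nilpotent (x * x) \<Longrightarrow> nilpotent x"
  unfolding nilpotent_def by (metis power_mult power2_eq_square)

lemma nilpotent_commute: "nilpotent (x * y) \<Longrightarrow> nilpotent (y * x)"
proof -
  assume "nilpotent (x * y)"
  then obtain n where "(x * y) ^ n = 0" unfolding nilpotent_def by blast
  moreover have "(y * x) ^ Suc n = y * (x * y) ^ n * x"
  proof (induction n)
    case (Suc n)
    have "(y * x) ^ Suc (Suc n) = y * x * (y * x) ^ Suc n" by (rule power_Suc)
    also have "\<dots> = y * (x * y * (x * y) ^ n) * x" using Suc.IH by (simp add: mult.assoc)
    finally show ?case by simp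
  qed simp
  ultimately show ?thesis unfolding nilpotent_def by (metis mult_zero_left mult_zero_right)
qed

lemma two_sided_ideal_left_quotient:
  assumes "two_sided_ideal P"
  shows "two_sided_ideal {u. \<forall>s\<in>S. \<forall>r. u * r * s \<in> P}"
  using assms unfolding two_sided_ideal_def
  by (auto simp: distrib_right mult.assoc simp flip: mult.assoc) (metis mult.assoc)+

lemma two_sided_ideal_right_quotient:
  assumes "two_sided_ideal P"
  shows "two_sided_ideal {v. \<forall>s\<in>S. \<forall>r. s * r * v \<in> P}"
  using assms unfolding two_sided_ideal_def
  by (auto simp: distrib_left) (metis mult.assoc)+

lemma prime_idealD_sandwich:
  assumes P: "prime_ideal P" and uv: "\<And>r. u * r * v \<in> P"
  shows "u \<in> P \<or> v \<in> P"
proof -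
  have ideal: "two_sided_ideal P" using P by (simp add: prime_ideal_def)
  define A where "A = {u. \<forall>s\<in>{v}. \<forall>r. u * r * s \<in> P}"
  define B where "B = {v. \<forall>s\<in>A. \<forall>r. s * r * v \<in> P}"
  have "two_sided_ideal A"
    unfolding A_def using ideal by (rule two_sided_ideal_left_quotient)
  moreover have "two_sided_ideal B"
    unfolding B_def using ideal by (rule two_sided_ideal_right_quotient)
  moreover have "\<forall>a\<in>A. \<forall>c\<in>B. a * c \<in> P"
    unfolding B_def using mult_1_right by (metis (no_types, lifting) mem_Collect_eq)
  ultimately have "A \<subseteq> P \<or> B \<subseteq> P" using P unfolding prime_ideal_def by blast
  moreover have "u \<in> A" using uv unfolding A_def by simp
  moreover have "v \<in> B" unfolding B_def A_def by simp
  ultimately show ?thesis by blast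
qed

locale semicommutative_ring =
  assumes semicommutative: "\<And>x y r :: 'a::ring_1. x * y = 0 \<Longrightarrow> x * r * y = 0"
begin

lemma interleaved_power_eq_0:
  assumes "x ^ k = 0" and "interleaved_power (x :: 'a) k y"
  shows "y = 0"
proof -
  have "x ^ j * y = 0" if "interleaved_power x k y" "x ^ (j + k) = 0" for j k y
    using that
  proof (induction arbitrary: j rule: interleaved_power.induct)
    case (interleaved_power_0 y)
    then show ?case by simp
  next
    case (interleaved_power_Suc k y r)
    have "x ^ Suc j * y = 0"
      using interleaved_power_Suc.IH[of "Suc j"] interleaved_power_Suc.prems by simp
    then have "x ^ j * (x * y) = 0" by (simp only: power_Suc2 mult.assoc)
    then have "x ^ j * r * (x * y) = 0" by (rule semicommutative)
    then show ?case by (simp add: mult.assoc)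
  qed
  from this[of k y 0] assms show ?thesis by simp
qed

lemma nilpotent_mult_left: "nilpotent (x :: 'a) \<Longrightarrow> nilpotent (r * x)"
  unfolding nilpotent_def using interleaved_power_power_mult interleaved_power_eq_0 by blast

lemma nilpotent_mult_right: "nilpotent (x :: 'a) \<Longrightarrow> nilpotent (x * r)"
  using nilpotent_mult_left nilpotent_commute by blast

lemma nilpotent_add:
  assumes "nilpotent (a :: 'a)" and "nilpotent b"
  shows "nilpotent (a + b)"
proof -
  obtain n m where n: "a ^ n = 0" and m: "b ^ m = 0"
    using assms unfolding nilpotent_def by blast
  \<comment> \<open>each word of length \<open>n + m\<close> contains \<open>a\<close> at least \<open>n\<close> times or \<open>b\<close> at least \<open>m\<close> times\<close>
  have "word_prod a b w = 0" if "length w = n + m" for w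
  proof (cases "n \<le> length (filter (\<lambda>c. c) w)")
    case True
    then show ?thesis
      using interleaved_power_mono interleaved_power_word_prod interleaved_power_eq_0[OF n] by blast
  next
    case False
    have "length (filter (\<lambda>c. c) w) + length (filter Not w) = length w"
      by (induction w) auto
    with False that have "m \<le> length (filter (\<lambda>c. c) (map Not w))"
      by (simp add: comp_def)
    then have "interleaved_power b m (word_prod b a (map Not w))"
      using interleaved_power_mono interleaved_power_word_prod by blast
    then have "word_prod b a (map Not w) = 0" by (rule interleaved_power_eq_0[OF m])
    then show ?thesis by (simp add: word_prod_map_Not)
  qed
  then have "(a + b) ^ (n + m) = 0"
    unfolding power_add_eq_sum_words by (auto intro: sum.neutral)
  then show ?thesis unfolding nilpotent_def by blast
qed

lemma nilpotent_sum:
  "finite S \<Longrightarrow> (\<And>i. i \<in> S \<Longrightarrow> nilpotent (f i :: 'a)) \<Longrightarrow> nilpotent (sum f S)"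
  by (induction S rule: finite_induct) (auto intro: nilpotent_add)

lemma nilpotent_in_prime_ideal:
  assumes P: "prime_ideal P" and "nilpotent (x :: 'a)"
  shows "x \<in> P"
proof -
  obtain n where "x ^ n = 0" using \<open>nilpotent x\<close> unfolding nilpotent_def by blast
  then show ?thesis
  proof (induction n arbitrary: x rule: less_induct)
    case (less n x)
    show ?case
    proof (cases "n \<le> 1")
      case True
      then consider "n = 0" | "n = 1" by linarith
      then have "x = 0"
      proof cases
        case 1
        then have "(1 :: 'a) = 0" using less.prems by simp
        then show "x = 0" by (metis mult_1_right mult_zero_right)
      next
        case 2
        then show "x = 0" using less.prems by simp
      qed
      then show ?thesis using P by (simp add: prime_ideal_def two_sided_ideal_def)
    next
      case False
      define m where "m = (n + 1) div 2"
      have "m < n" "n \<le> 2 * m" using False by (auto simp: m_def)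
      then have "x ^ (2 * m) = 0"
        using less.prems by (metis le_add_diff_inverse2 mult_zero_right power_add)
      have "x * r * x \<in> P" for r
      proof -
        have "(x * r * x) ^ m = 0"
          using interleaved_power_sandwich interleaved_power_eq_0[OF \<open>x ^ (2 * m) = 0\<close>] by blast
        then show ?thesis using less.IH[OF \<open>m < n\<close>] by blast
      qed
      then show ?thesis using prime_idealD_sandwich[OF P] by blast
    qed
  qed
qed

lemma nilpotent_in_prime_radical:
  "nilpotent (x :: 'a) \<Longrightarrow> x \<in> prime_radical TYPE('a)"
  unfolding prime_radical_def using nilpotent_in_prime_ideal by blast

lemma nilpotent_antidiagonal_step:
  fixes A B :: "nat \<Rightarrow> 'a"
  assumes product: "(\<Sum>l\<le>i + j. A l * B (i + j - l)) = 0"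
    and earlier_diagonals: "\<And>i' j'. i' + j' < i + j \<Longrightarrow> nilpotent (A i' * B j')"
    and same_diagonal: "\<And>i' j'. i' + j' = i + j \<Longrightarrow> j' < j \<Longrightarrow> nilpotent (A i' * B j')"
  shows "nilpotent (A i * B j)"
proof -
  let ?k = "i + j"
  let ?term = "\<lambda>l. B j * (A l * B (?k - l))"
  have "nilpotent (?term l)" if "l \<in> {..?k} - {i}" for l
  proof (cases "i < l")
    case True
    then have "nilpotent (A l * B (?k - l))" using that by (intro same_diagonal) auto
    then show ?thesis by (rule nilpotent_mult_left)
  next
    case False
    then have "nilpotent (A l * B j)" using that by (intro earlier_diagonals) auto
    then have "nilpotent (B j * A l * B (?k - l))"
      by (rule nilpotent_mult_right[OF nilpotent_commute])
    then show ?thesis by (simp add: mult.assoc)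
  qed
  then have rest: "nilpotent (\<Sum>l \<in> {..?k} - {i}. ?term l)"
    by (intro nilpotent_sum) auto
  have "0 = B j * (\<Sum>l\<le>?k. A l * B (?k - l))" using product by simp
  also have "\<dots> = ?term i + (\<Sum>l \<in> {..?k} - {i}. ?term l)"
    unfolding sum_distrib_left by (rule sum.remove) auto
  finally have "B j * (A i * B j) = - (\<Sum>l \<in> {..?k} - {i}. ?term l)"
    by (simp add: eq_neg_iff_add_eq_0)
  then have "nilpotent (A i * (B j * (A i * B j)))"
    using nilpotent_mult_left[OF nilpotent_minus[OF rest]] by simp
  then have "nilpotent (A i * B j * (A i * B j))" by (simp add: mult.assoc)
  then show ?thesis by (rule nilpotent_square)
qed

lemma nilpotent_coeff_mult_if_Cauchy_product_eq_0:
  fixes A B :: "nat \<Rightarrow> 'a"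
  assumes "\<And>k. (\<Sum>l\<le>k. A l * B (k - l)) = 0"
  shows "nilpotent (A i * B j)"
proof -
  have "nilpotent (A i * B j)" if "i + j = k" for k i j
    using that
  proof (induction k arbitrary: i j rule: less_induct)
    case (less k)
    note earlier_diagonals = less.IH
    from less.prems show ?case
    proof (induction j arbitrary: i rule: less_induct)
      case (less j)
      show ?case
        by (rule nilpotent_antidiagonal_step) (use assms earlier_diagonals less in auto)
    qed
  qed
  then show ?thesis by blast
qed

end

lemma poly_prod_zero_Cauchy_product:
  fixes a b :: "nat \<Rightarrow> 'a::ring_1"
  assumes "poly_prod_zero a m b n"
  shows "(\<Sum>l\<le>k. (if l \<le> m then a l else 0) * (if k - l \<le> n then b (k - l) else 0)) = 0"
proof -
  define S where "S = {l. l \<le> k \<and> l \<le> m \<and> k - l \<le> n}"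
  have "(\<Sum>l\<le>k. (if l \<le> m then a l else 0) * (if k - l \<le> n then b (k - l) else 0))
      = (\<Sum>l\<le>k. if l \<in> S then a l * b (k - l) else 0)"
    by (rule sum.cong) (auto simp: S_def)
  also have "\<dots> = (\<Sum>l\<in>S. a l * b (k - l))"
    by (simp add: S_def sum.inter_filter[symmetric])
  also have "\<dots> = (\<Sum>p \<in> (\<lambda>l. (l, k - l)) ` S. a (fst p) * b (snd p))"
    by (subst sum.reindex) (auto simp: inj_on_def)
  also have "(\<lambda>l. (l, k - l)) ` S = {(i, j). i \<le> m \<and> j \<le> n \<and> i + j = k}"
    unfolding S_def by (auto simp: image_iff)
  finally show ?thesis using assms unfolding poly_prod_zero_def by simp
qed

theorem proposition2p8:
  assumes "semicommutative TYPE('a::ring_1)"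
  shows "almost_armendariz TYPE('a)"
proof -
  interpret semicommutative_ring
    using assms unfolding semicommutative_def semicommutative_ring_def by blast
  show ?thesis unfolding almost_armendariz_def
  proof (intro allI impI)
    fix a :: "nat \<Rightarrow> 'a" and m b n i j
    assume "poly_prod_zero a m b n" and "i \<le> m" "j \<le> n"
    let ?A = "\<lambda>l. if l \<le> m then a l else 0" and ?B = "\<lambda>l. if l \<le> n then b l else 0"
    have "nilpotent (?A i * ?B j)"
      by (rule nilpotent_coeff_mult_if_Cauchy_product_eq_0)
        (rule poly_prod_zero_Cauchy_product[OF \<open>poly_prod_zero a m b n\<close>])
    with \<open>i \<le> m\<close> \<open>j \<le> n\<close> show "a i * b j \<in> prime_radical TYPE('a)"
      by (simp add: nilpotent_in_prime_radical)
  qed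
qed

end
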